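(* Let $N\in\mathbb N$ and let $z_1> \dots> z_N$ be the zeros of the classical Hermite polynomial $H_N$ (orthogonal with respect to the weight $e^{-x^2}$ on $\mathbb R$). Form the matrix $S=(s_{i,j})_{i,j=1,\dots,N}$ with $$s_{i,i}:=1+\sum_{l\ne i}(z_i-z_l)^{-2},\qquad s_{i,j}:=-(z_i-z_j)^{-2}\quad (i\ne j).$$ Then $\det S=N!$. *)

theory Defs
  imports "HOL-Computational_Algebra.Polynomial" "Jordan_Normal_Form.Determinant"
begin

fun hermite :: "nat \<Rightarrow> real poly" where
  "hermite 0 = 1"
| "hermite (Suc 0) = [:0, 2:]"
| "hermite (Suc (Suc n)) = [:0, 2:] * hermite (Suc n) - smult (2 * real (Suc n)) (hermite n)"

definition hermite_S :: "nat \<Rightarrow> (nat \<Rightarrow> real) \<Rightarrow> real mat" where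
  "hermite_S N z = mat N N (\<lambda>(i, j).
     if i = j then 1 + (\<Sum>l\<in>{..<N} - {i}. 1 / (z i - z l)^2)
     else - (1 / (z i - z j)^2))"

end

theory Submission
  imports Defs
begin

text \<open>The zeros of \<open>H\<^sub>N\<close> satisfy Stieltjes' relations: the sum of \<open>1 / (z\<^sub>i - z\<^sub>l)\<close>
  over \<open>l \<noteq> i\<close> equals \<open>z\<^sub>i\<close>. Indeed, at a simple zero \<open>H''/H'\<close> is twice that sum, and
  Hermite's equation \<open>H'' - 2 x H' + 2 N H = 0\<close> makes it \<open>2 z\<^sub>i\<close>.
  Expanding \<open>y\<^sup>k\<close> around \<open>x\<close> shows that \<open>(x\<^sup>k - y\<^sup>k) / (x - y)\<^sup>2\<close> is \<open>k x\<^sup>k\<^sup>-\<^sup>1 / (x - y)\<close>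
  minus a polynomial of degree \<open>k - 2\<close> in \<open>x\<close>. With the Stieltjes relations, \<open>S\<close> therefore maps
  the column \<open>(z\<^sub>i\<^sup>k)\<^sub>i\<close> of the Vandermonde matrix \<open>V\<close> to the values at the \<open>z\<^sub>i\<close> of a
  polynomial of degree \<open>k\<close> with leading coefficient \<open>k + 1\<close>. So \<open>S V = V T\<close> with \<open>T\<close> upper
  triangular with diagonal \<open>1, 2, \<dots>, N\<close>, and \<open>det S = N!\<close> since \<open>V\<close> is invertible.\<close>

lemma pderiv_hermite: "pderiv (hermite (Suc n)) = smult (2 * real (Suc n)) (hermite n)"
proof (induction n rule: hermite.induct)
  case (3 n)
  have "pderiv (hermite (Suc (Suc (Suc n)))) = smult 2 (hermite (Suc (Suc n)))
      + [:0, 2:] * pderiv (hermite (Suc (Suc n)))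
      - smult (2 * real (Suc (Suc n))) (pderiv (hermite (Suc n)))"
    by (simp only: hermite.simps(3)[of "Suc n"] pderiv_diff pderiv_mult pderiv_smult)
      (simp add: pderiv_pCons)
  also have "\<dots> = smult (2 * real (Suc (Suc (Suc n)))) (hermite (Suc (Suc n)))"
    unfolding 3 by (rule poly_ext) (simp add: algebra_simps)
  finally show ?case .
qed (simp_all add: pderiv_pCons)

lemma hermite_Suc: "hermite (Suc n) = [:0, 2:] * hermite n - pderiv (hermite n)"
  by (cases n) (simp_all add: pderiv_hermite)

lemma hermite_ode:
  "pderiv (pderiv (hermite n)) - [:0, 2:] * pderiv (hermite n) + smult (2 * real n) (hermite n) = 0"
proof -
  have "smult (2 * real (Suc n)) (hermite n) = pderiv ([:0, 2:] * hermite n - pderiv (hermite n))"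
    by (simp only: hermite_Suc[symmetric] pderiv_hermite)
  also have "\<dots> = smult 2 (hermite n) + [:0, 2:] * pderiv (hermite n) - pderiv (pderiv (hermite n))"
    by (simp only: pderiv_diff pderiv_mult) (simp add: pderiv_pCons)
  finally have "poly (smult (2 * real (Suc n)) (hermite n)) x =
      poly (smult 2 (hermite n) + [:0, 2:] * pderiv (hermite n) - pderiv (pderiv (hermite n))) x" for x
    by simp
  then show ?thesis
    by (intro poly_ext) (simp add: algebra_simps)
qed

lemma degree_hermite: "degree (hermite n) = n" and lead_coeff_hermite: "lead_coeff (hermite n) = 2 ^ n"
proof (induction n)
  case (Suc n)
  have deriv: "degree (pderiv (hermite n)) < Suc n"
    using degree_pderiv[of "hermite n"] Suc.IH(1) by simp
  moreover have coeffs: "degree ([:0, 2:] * hermite n) = Suc n"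
    "coeff ([:0, 2:] * hermite n) (Suc n) = 2 ^ Suc n"
    using Suc.IH by (auto simp: degree_mult_eq)
  ultimately show deg: "degree (hermite (Suc n)) = Suc n"
    unfolding hermite_Suc diff_conv_add_uminus
    using degree_add_eq_left[of "- pderiv (hermite n)" "[:0, 2:] * hermite n"] by simp
  show "lead_coeff (hermite (Suc n)) = 2 ^ Suc n"
    unfolding deg using coeffs(2) coeff_eq_0[OF deriv] by (simp add: hermite_Suc)
qed simp_all

lemma poly_eq_smult_prod_roots:
  fixes p :: "'a::idom poly"
  assumes "degree p = N" "inj_on z {..<N}" "\<And>i. i < N \<Longrightarrow> poly p (z i) = 0"
  shows "p = smult (lead_coeff p) (\<Prod>l<N. [:- z l, 1:])"
proof (rule poly_eqI_degree_lead_coeff[where n = N and A = "z ` {..<N}"])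
  have "degree (\<Prod>l<N. [:- z l, 1:]) = N"
    by (simp add: degree_prod_eq_sum_degree)
  then show "coeff p N = coeff (smult (lead_coeff p) (\<Prod>l<N. [:- z l, 1:])) N"
    "degree (smult (lead_coeff p) (\<Prod>l<N. [:- z l, 1:])) \<le> N"
    using assms(1) lead_coeff_prod[of "\<lambda>l. [:- z l, 1:]" "{..<N}"] by simp_all
  show "N \<le> card (z ` {..<N})"
    using card_image[OF assms(2)] by simp
  fix x assume "x \<in> z ` {..<N}"
  then show "poly p x = poly (smult (lead_coeff p) (\<Prod>l<N. [:- z l, 1:])) x"
    using assms(3) by (auto simp: poly_prod)
qed (use assms(1) in simp)

lemma poly_pderiv_prod_linear:
  fixes z :: "'b \<Rightarrow> 'a::field"
  assumes "finite A" "x \<notin> z ` A"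
  shows "poly (pderiv (\<Prod>l\<in>A. [:- z l, 1:])) x
    = poly (\<Prod>l\<in>A. [:- z l, 1:]) x * (\<Sum>l\<in>A. 1 / (x - z l))"
proof -
  have "(\<Prod>m\<in>A - {l}. x - z m) = (\<Prod>m\<in>A. x - z m) / (x - z l)" if "l \<in> A" for l
    using assms that by (simp add: prod.remove[of A l] image_iff)
  then show ?thesis
    by (simp add: pderiv_prod poly_sum poly_prod pderiv_pCons sum_distrib_left)
qed

lemma poly_pderiv_prod_linear_at_root:
  fixes z :: "'b \<Rightarrow> 'a::field"
  assumes "finite A" "inj_on z A" "i \<in> A"
  shows "poly (pderiv (\<Prod>l\<in>A. [:- z l, 1:])) (z i) \<noteq> 0"
    and "poly (pderiv (pderiv (\<Prod>l\<in>A. [:- z l, 1:]))) (z i)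
      = 2 * poly (pderiv (\<Prod>l\<in>A. [:- z l, 1:])) (z i) * (\<Sum>l\<in>A - {i}. 1 / (z i - z l))"
proof -
  define g where "g = (\<Prod>l\<in>A - {i}. [:- z l, 1:])"
  have prod_eq: "(\<Prod>l\<in>A. [:- z l, 1:]) = [:- z i, 1:] * g"
    unfolding g_def using assms by (simp add: prod.remove)
  have not_root: "z i \<notin> z ` (A - {i})"
    using assms by (auto simp: inj_on_def)
  then have "poly g (z i) \<noteq> 0"
    unfolding g_def using assms(1) by (auto simp: poly_prod)
  moreover have "poly (pderiv (\<Prod>l\<in>A. [:- z l, 1:])) (z i) = poly g (z i)"
    unfolding prod_eq pderiv_mult by (simp add: pderiv_pCons)
  moreover have "poly (pderiv (pderiv (\<Prod>l\<in>A. [:- z l, 1:]))) (z i) = 2 * poly (pderiv g) (z i)"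
    unfolding prod_eq pderiv_mult pderiv_add by (simp add: pderiv_pCons)
  ultimately show "poly (pderiv (\<Prod>l\<in>A. [:- z l, 1:])) (z i) \<noteq> 0"
    "poly (pderiv (pderiv (\<Prod>l\<in>A. [:- z l, 1:]))) (z i)
      = 2 * poly (pderiv (\<Prod>l\<in>A. [:- z l, 1:])) (z i) * (\<Sum>l\<in>A - {i}. 1 / (z i - z l))"
    using poly_pderiv_prod_linear[OF _ not_root] assms(1) unfolding g_def by simp_all
qed

lemma hermite_roots_stieltjes:
  assumes "inj_on z {..<N}" "\<And>i. i < N \<Longrightarrow> poly (hermite N) (z i) = 0" "i < N"
  shows "(\<Sum>l\<in>{..<N} - {i}. 1 / (z i - z l)) = z i"
proof -
  let ?W = "\<Prod>l<N. [:- z l, 1:]"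
  have "hermite N = smult (2 ^ N) ?W"
    using poly_eq_smult_prod_roots[OF degree_hermite assms(1,2)] unfolding lead_coeff_hermite .
  moreover have "poly (pderiv (pderiv (hermite N))) (z i) = 2 * z i * poly (pderiv (hermite N)) (z i)"
    using arg_cong[OF hermite_ode[of N], of "\<lambda>p. poly p (z i)"] assms(2,3) by simp
  ultimately have "poly (pderiv (pderiv ?W)) (z i) = 2 * z i * poly (pderiv ?W) (z i)"
    by (simp add: pderiv_smult)
  then show ?thesis
    using poly_pderiv_prod_linear_at_root[of "{..<N}" z i] assms(1,3) by simp
qed

definition vandermonde :: "nat \<Rightarrow> (nat \<Rightarrow> 'a::comm_ring_1) \<Rightarrow> 'a mat" where
  "vandermonde N z = mat N N (\<lambda>(i, k). z i ^ k)"

lemma vandermonde_carrier [simp]: "vandermonde N z \<in> carrier_mat N N"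
  by (simp add: vandermonde_def)

lemma vandermonde_mult_vec:
  assumes "v \<in> carrier_vec N" "i < N"
  shows "(vandermonde N z *\<^sub>v v) $ i = poly (\<Sum>k<N. monom (v $ k) k) (z i)"
  using assms by (simp add: vandermonde_def scalar_prod_def atLeast0LessThan poly_sum poly_monom
      mult.commute)

lemma det_vandermonde_nonzero:
  fixes z :: "nat \<Rightarrow> 'a::idom"
  assumes "inj_on z {..<N}"
  shows "det (vandermonde N z) \<noteq> 0"
proof
  assume "det (vandermonde N z) = 0"
  then obtain v where v: "v \<in> carrier_vec N" "v \<noteq> 0\<^sub>v N" "vandermonde N z *\<^sub>v v = 0\<^sub>v N"
    using det_0_iff_vec_prod_zero[OF vandermonde_carrier] by blast
  define p where "p = (\<Sum>k<N. monom (v $ k) k)"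
  have coeff_p: "coeff p k = (if k < N then v $ k else 0)" for k
    by (simp add: p_def coeff_sum)
  obtain k where k: "k < N" "v $ k \<noteq> 0"
    using v(1,2) by (auto simp: vec_eq_iff)
  then have "p \<noteq> 0"
    using coeff_p by (metis coeff_0)
  have "degree p < N"
    using k(1) coeff_p by (intro le_less_trans[OF degree_le[of "N - 1"]]) auto
  moreover have "z ` {..<N} \<subseteq> {x. poly p x = 0}"
    using v(3) vandermonde_mult_vec[OF v(1), where z = z] by (auto simp: p_def)
  then have "card (z ` {..<N}) \<le> card {x. poly p x = 0}"
    by (rule card_mono[OF poly_roots_finite[OF \<open>p \<noteq> 0\<close>]])
  then have "N \<le> card {x. poly p x = 0}"
    using card_image[OF assms] by simp
  ultimately show False
    using card_poly_roots_bound[OF \<open>p \<noteq> 0\<close>] by simp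
qed

lemma sum_monom_coeff_lessThan:
  assumes "degree p < N"
  shows "(\<Sum>m<N. monom (coeff p m) m) = p"
  using assms by (auto simp: poly_eq_iff coeff_sum coeff_eq_0)

lemma mat_poly_columns_eq_vandermonde_mult:
  assumes "\<And>k. k < N \<Longrightarrow> degree (p k) < N"
  shows "mat N N (\<lambda>(i, k). poly (p k) (z i))
    = vandermonde N z * mat N N (\<lambda>(m, k). coeff (p k) m)"
proof (rule eq_matI)
  fix i k assume "i < dim_row (vandermonde N z * mat N N (\<lambda>(m, k). coeff (p k) m))"
    "k < dim_col (vandermonde N z * mat N N (\<lambda>(m, k). coeff (p k) m))"
  then have ik: "i < N" "k < N"
    by (simp_all add: vandermonde_def)
  have "(vandermonde N z * mat N N (\<lambda>(m, k). coeff (p k) m)) $$ (i, k)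
      = (vandermonde N z *\<^sub>v vec N (\<lambda>m. coeff (p k) m)) $ i"
    using ik by (simp add: vandermonde_def)
  also have "\<dots> = poly (p k) (z i)"
    using ik assms by (simp add: vandermonde_mult_vec sum_monom_coeff_lessThan)
  finally show "mat N N (\<lambda>(i, k). poly (p k) (z i)) $$ (i, k)
      = (vandermonde N z * mat N N (\<lambda>(m, k). coeff (p k) m)) $$ (i, k)"
    using ik by simp
qed (simp_all add: vandermonde_def)

lemma det_mat_poly_columns:
  assumes "\<And>k. k < N \<Longrightarrow> degree (p k) \<le> k"
  shows "det (mat N N (\<lambda>(i, k). poly (p k) (z i)))
    = det (vandermonde N z) * (\<Prod>k<N. coeff (p k) k)"
proof -
  let ?T = "mat N N (\<lambda>(m, k). coeff (p k) m)"
  have "upper_triangular ?T"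
    using assms by (auto simp: upper_triangular_def intro!: coeff_eq_0) (meson le_less_trans less_trans)
  then have "det ?T = (\<Prod>k<N. coeff (p k) k)"
    by (simp add: det_upper_triangular[of _ N] prod_list_diag_prod atLeast0LessThan)
  moreover have "mat N N (\<lambda>(i, k). poly (p k) (z i)) = vandermonde N z * ?T"
    using assms by (intro mat_poly_columns_eq_vandermonde_mult) (meson le_less_trans)
  ultimately show ?thesis
    by (simp add: det_mult[of _ N])
qed

definition pow_taylor_rem :: "nat \<Rightarrow> 'a::comm_semiring_1 \<Rightarrow> 'a poly" where
  "pow_taylor_rem k y = (\<Sum>m<k - 1. monom (of_nat (m + 1) * y ^ (k - 2 - m)) m)"

lemma coeff_pow_taylor_rem:
  "coeff (pow_taylor_rem k y) m = (if m + 1 < k then of_nat (m + 1) * y ^ (k - 2 - m) else 0)"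
  by (auto simp: pow_taylor_rem_def coeff_sum)

lemma pow_taylor_rem_Suc:
  "pow_taylor_rem (Suc k) y = smult y (pow_taylor_rem k y) + monom (of_nat k) (k - 1)"
proof (rule poly_eqI)
  fix m
  show "coeff (pow_taylor_rem (Suc k) y) m
    = coeff (smult y (pow_taylor_rem k y) + monom (of_nat k) (k - 1)) m"
  proof (cases "m + 2 \<le> k")
    case True
    then have "k - 1 - m = Suc (k - 2 - m)"
      by simp
    with True show ?thesis
      by (auto simp: coeff_pow_taylor_rem mult_ac)
  next
    case False
    then show ?thesis
      by (cases k) (auto simp: coeff_pow_taylor_rem)
  qed
qed

lemma pow_taylor_expansion:
  fixes x y :: "'a::comm_ring_1"
  shows "y ^ k = x ^ k + of_nat k * x ^ (k - 1) * (y - x) + (y - x)^2 * poly (pow_taylor_rem k y) x"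
proof (induction k)
  case (Suc k)
  note IH = Suc.IH
  show ?case
  proof (cases k)
    case (Suc j)
    have "y ^ Suc k
      = y * (x ^ k + of_nat k * x ^ (k - 1) * (y - x) + (y - x)^2 * poly (pow_taylor_rem k y) x)"
      using IH by simp
    then show ?thesis
      unfolding pow_taylor_rem_Suc[of k] using \<open>k = Suc j\<close>
      by (simp add: poly_monom algebra_simps power2_eq_square)
  qed (simp add: pow_taylor_rem_def)
qed (simp add: pow_taylor_rem_def)

lemma poly_pow_taylor_rem_diag: "poly (pow_taylor_rem k x) x = of_nat (k choose 2) * x ^ (k - 2)"
proof (induction k)
  case (Suc k)
  show ?case
  proof (cases "k < 2")
    case True
    then consider "k = 0" | "k = 1"
      by linarith
    then show ?thesis
      by cases (simp_all add: pow_taylor_rem_def numeral_2_eq_2)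
  next
    case False
    then obtain j where "k = Suc (Suc j)"
      by (metis add_2_eq_Suc le_Suc_ex not_less)
    moreover have "Suc k choose 2 = k + (k choose 2)"
      by (simp add: numeral_2_eq_2)
    ultimately show ?thesis
      using Suc.IH by (simp add: pow_taylor_rem_Suc poly_monom algebra_simps)
  qed
qed (simp add: pow_taylor_rem_def numeral_2_eq_2)

lemma pow_diff_divide_square:
  fixes x y :: "'a::field"
  assumes "x \<noteq> y"
  shows "(x ^ k - y ^ k) / (x - y)^2 = of_nat k * x ^ (k - 1) / (x - y) - poly (pow_taylor_rem k y) x"
proof -
  have "x ^ k - y ^ k = of_nat k * x ^ (k - 1) * (x - y) - (x - y)^2 * poly (pow_taylor_rem k y) x"
    using pow_taylor_expansion[of y k x] by (simp add: power2_commute algebra_simps)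
  then have "(x ^ k - y ^ k) / (x - y)^2
      = (of_nat k * x ^ (k - 1) * (x - y) - (x - y)^2 * poly (pow_taylor_rem k y) x) / (x - y)^2"
    by simp
  also have "\<dots> = of_nat k * x ^ (k - 1) / (x - y) - poly (pow_taylor_rem k y) x"
    using assms by (simp add: diff_divide_distrib power2_eq_square)
  finally show ?thesis .
qed

lemma hermite_S_row_sum:
  assumes "i < N"
  shows "(\<Sum>j<N. hermite_S N z $$ (i, j) * v j)
    = v i + (\<Sum>l\<in>{..<N} - {i}. (v i - v l) / (z i - z l)^2)"
proof -
  have "(\<Sum>j<N. hermite_S N z $$ (i, j) * v j)
      = hermite_S N z $$ (i, i) * v i + (\<Sum>l\<in>{..<N} - {i}. hermite_S N z $$ (i, l) * v l)"
    using assms by (simp add: sum.remove)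
  also have "\<dots> = v i + (\<Sum>l\<in>{..<N} - {i}. v i / (z i - z l)^2 - v l / (z i - z l)^2)"
    using assms by (simp add: hermite_S_def sum_subtractf sum_distrib_left sum_negf algebra_simps)
  finally show ?thesis
    by (simp add: diff_divide_distrib)
qed

definition hermite_S_column :: "nat \<Rightarrow> (nat \<Rightarrow> real) \<Rightarrow> nat \<Rightarrow> real poly" where
  "hermite_S_column N z k =
     monom (of_nat (k + 1)) k + monom (of_nat (k choose 2)) (k - 2) - (\<Sum>l<N. pow_taylor_rem k (z l))"

lemma degree_hermite_S_column: "degree (hermite_S_column N z k) \<le> k"
  by (rule degree_le) (auto simp: hermite_S_column_def coeff_sum coeff_pow_taylor_rem)

lemma coeff_hermite_S_column: "coeff (hermite_S_column N z k) k = of_nat (k + 1)"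
  by (auto simp: hermite_S_column_def coeff_sum coeff_pow_taylor_rem)

lemma poly_hermite_S_column:
  assumes inj: "inj_on z {..<N}" and i: "i < N"
    and stieltjes: "(\<Sum>l\<in>{..<N} - {i}. 1 / (z i - z l)) = z i"
  shows "(\<Sum>j<N. hermite_S N z $$ (i, j) * z j ^ k) = poly (hermite_S_column N z k) (z i)"
proof -
  let ?R = "{..<N} - {i}"
  let ?Q = "\<lambda>l. poly (pow_taylor_rem k (z l)) (z i)"
  have distinct: "z i \<noteq> z l" if "l \<in> ?R" for l
    using that inj i by (auto simp: inj_on_def)
  have "(\<Sum>j<N. hermite_S N z $$ (i, j) * z j ^ k)
      = z i ^ k + (\<Sum>l\<in>?R. (z i ^ k - z l ^ k) / (z i - z l)^2)"
    using i by (rule hermite_S_row_sum)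
  also have "\<dots> = z i ^ k + (\<Sum>l\<in>?R. of_nat k * z i ^ (k - 1) * (1 / (z i - z l)) - ?Q l)"
    using distinct by (simp add: pow_diff_divide_square)
  also have "\<dots>
      = z i ^ k + of_nat k * z i ^ (k - 1) * (\<Sum>l\<in>?R. 1 / (z i - z l)) - (\<Sum>l\<in>?R. ?Q l)"
    by (simp add: sum_subtractf sum_distrib_left)
  also have "\<dots> = z i ^ k + of_nat k * z i ^ (k - 1) * z i - (\<Sum>l\<in>?R. ?Q l)"
    unfolding stieltjes ..
  also have "\<dots> = of_nat (k + 1) * z i ^ k + ?Q i - (\<Sum>l<N. ?Q l)"
    using i by (cases k) (simp_all add: sum.remove algebra_simps)
  also have "\<dots> = poly (hermite_S_column N z k) (z i)"
    by (simp add: hermite_S_column_def poly_monom poly_sum poly_pow_taylor_rem_diag)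
  finally show ?thesis .
qed

lemma hermite_S_mult_vandermonde:
  assumes inj: "inj_on z {..<N}"
    and stieltjes: "\<And>i. i < N \<Longrightarrow> (\<Sum>l\<in>{..<N} - {i}. 1 / (z i - z l)) = z i"
  shows "hermite_S N z * vandermonde N z = mat N N (\<lambda>(i, k). poly (hermite_S_column N z k) (z i))"
proof (rule eq_matI)
  fix i k assume "i < dim_row (mat N N (\<lambda>(i, k). poly (hermite_S_column N z k) (z i)))"
    "k < dim_col (mat N N (\<lambda>(i, k). poly (hermite_S_column N z k) (z i)))"
  then have "i < N" "k < N"
    by simp_all
  then show "(hermite_S N z * vandermonde N z) $$ (i, k)
      = mat N N (\<lambda>(i, k). poly (hermite_S_column N z k) (z i)) $$ (i, k)"
    using poly_hermite_S_column[OF inj _ stieltjes]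
    by (simp add: hermite_S_def vandermonde_def scalar_prod_def atLeast0LessThan)
qed (simp_all add: hermite_S_def vandermonde_def)

lemma det_hermite_S:
  assumes "inj_on z {..<N}"
    and "\<And>i. i < N \<Longrightarrow> (\<Sum>l\<in>{..<N} - {i}. 1 / (z i - z l)) = z i"
  shows "det (hermite_S N z) = fact N"
proof -
  have "det (hermite_S N z) * det (vandermonde N z) = det (hermite_S N z * vandermonde N z)"
    by (rule det_mult[of _ N, symmetric]) (simp_all add: hermite_S_def)
  also have "\<dots> = det (vandermonde N z) * (\<Prod>k<N. of_nat (k + 1))"
    by (simp add: hermite_S_mult_vandermonde[OF assms] det_mat_poly_columns degree_hermite_S_column
        coeff_hermite_S_column del: of_nat_add)
  also have "(\<Prod>k<N. of_nat (k + 1)) = (fact N :: real)"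
    by (simp add: fact_prod_Suc atLeast0LessThan)
  finally show ?thesis
    using det_vandermonde_nonzero[OF assms(1)] by simp
qed

theorem corollary2p3:
  fixes N :: nat and z :: "nat \<Rightarrow> real"
  assumes roots: "\<forall>i<N. poly (hermite N) (z i) = 0"
    and decr: "\<forall>i j. i < j \<and> j < N \<longrightarrow> z j < z i"
  shows "det (hermite_S N z) = fact N"
proof (rule det_hermite_S)
  show inj: "inj_on z {..<N}"
    using decr by (intro inj_onI) (metis lessThan_iff linorder_neqE_nat order_less_irrefl)
  show "(\<Sum>l\<in>{..<N} - {i}. 1 / (z i - z l)) = z i" if "i < N" for i
    using hermite_roots_stieltjes[OF inj _ that] roots by blast
qed

end
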